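(* Let $q\ge 2$ be a prime power, $m\ge 1$, $n=q^m-1$, and suppose $n=r_1r_2$ with integers $r_1,r_2>1$ and $\gcd(r_1,r_2)=1$. Let $a$ be the multiplicative order of $q$ modulo $r_1$; then $a\mid m$. Fix a generator $\alpha$ of the multiplicative group $\mathbb{F}_{q^m}^*$ and a group isomorphism $T:\mathbb{Z}_n\to\mathbb{Z}_{r_1}\times\mathbb{Z}_{r_2}$. Let $$\Gamma=\left\{(i_1,i_2)\in\mathbb{Z}_{r_1}\times\mathbb{Z}_{r_2}\ \middle|\ 0\le i_1<a,\ 0\le i_2<\frac{m}{a}\right\}.$$ Then $T^{-1}(\Gamma)\subseteq\mathbb{Z}_n$ is a set of check positions for the punctured code $R^*_q(m(q-1)-2,m)$; that is, the set of coordinates $\{\alpha^i\mid i\in T^{-1}(\Gamma)\}$ is a set of check positions of $R^*_q(m(q-1)-2,m)$.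
   Context: $\mathbb{F}=\mathbb{F}_q$. Elements of $\mathbb{Z}_r$ are identified with the integers $0,\dots,r-1$. For a natural number $k$ with $q$-ary expansion $k=\sum_{r\ge0}k_rq^r$, $k_r\in\{0,\dots,q-1\}$, its $q$-weight is $\mathrm{wt}_q(k)=\sum_r k_r$. Let $G$ be the additive group of $\mathbb{F}_{q^m}$; a word of length $q^m$ is a vector $(c_g)_{g\in G}\in\mathbb{F}^G$, written $bX^0+\sum_{i=0}^{n-1}a_iX^{\alpha^i}$ (coordinate $0$ has entry $b$, coordinate $\alpha^i$ has entry $a_i$). For $0<\rho\le m(q-1)$, the generalized Reed–Muller code $R_q(\rho,m)$ is the set of words $bX^0+\sum_i a_iX^{\alpha^i}$ such that $b\cdot 0^s+\sum_{i=0}^{n-1}a_i\alpha^{is}=0$ for every integer $s$ with $0\le s<q^m-1$ and $\mathrm{wt}_q(s)<m(q-1)-\rho$ (convention $0^0=1$). The punctured code $R^*_q(\rho,m)$ is obtained from $R_q(\rho,m)$ by deleting the coordinate $X^0$; its coordinates are $\alpha^0,\dots,\alpha^{n-1}$, indexed by $i\in\mathbb{Z}_n$. For a linear code $C$ of dimension $k$ with coordinate set $P$, an information set is $I\subseteq P$ with $|I|=k$ such that the projection of $C$ onto the coordinates in $I$ is all of $\mathbb{F}^{k}$; a set of check positions is the complement $P\setminus I$ of an information set. *)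

theory Defs
  imports "HOL-Number_Theory.Number_Theory" "HOL-Library.FuncSet"
begin

text \<open>q-ary weight: sum of the base-q digits of k (digits at positions r > k vanish for q >= 2).\<close>
definition qweight :: "nat \<Rightarrow> nat \<Rightarrow> nat" where
  "qweight q k = (\<Sum>r\<le>k. (k div q ^ r) mod q)"

definition is_subfield :: "'k::field set \<Rightarrow> bool" where
  "is_subfield F \<longleftrightarrow> 0 \<in> F \<and> 1 \<in> F \<and>
     (\<forall>x\<in>F. \<forall>y\<in>F. x + y \<in> F \<and> x * y \<in> F) \<and>
     (\<forall>x\<in>F. - x \<in> F) \<and> (\<forall>x\<in>F. x \<noteq> 0 \<longrightarrow> inverse x \<in> F)"

text \<open>Generalized Reed-Muller code R_q(rho,m) over F (subfield of size q of 'k, |'k| = q^m),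
  with respect to the primitive element alpha. A word is a pair (b, a): b is the entry at
  coordinate X^0, a i the entry at coordinate alpha^i, for i < n = q^m - 1.\<close>
definition GRM :: "'k::field set \<Rightarrow> nat \<Rightarrow> nat \<Rightarrow> nat \<Rightarrow> 'k \<Rightarrow> ('k \<times> (nat \<Rightarrow> 'k)) set" where
  "GRM F q m \<rho> \<alpha> = {(b, a). b \<in> F \<and> a \<in> {0..<q^m - 1} \<rightarrow>\<^sub>E F \<and>
      (\<forall>s. s < q^m - 1 \<and> qweight q s < m * (q - 1) - \<rho> \<longrightarrow>
         b * 0 ^ s + (\<Sum>i<q^m - 1. a i * \<alpha> ^ (i * s)) = 0)}"

definition GRM_punct :: "'k::field set \<Rightarrow> nat \<Rightarrow> nat \<Rightarrow> nat \<Rightarrow> 'k \<Rightarrow> (nat \<Rightarrow> 'k) set" where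
  "GRM_punct F q m \<rho> \<alpha> = {a. \<exists>b. (b, a) \<in> GRM F q m \<rho> \<alpha>}"

definition code_dim :: "'k set \<Rightarrow> ('i \<Rightarrow> 'k) set \<Rightarrow> nat" where
  "code_dim F C = (THE k. card C = card F ^ k)"

definition information_set :: "'k set \<Rightarrow> 'i set \<Rightarrow> ('i \<Rightarrow> 'k) set \<Rightarrow> 'i set \<Rightarrow> bool" where
  "information_set F P C I \<longleftrightarrow> I \<subseteq> P \<and> card I = code_dim F C \<and>
     (\<lambda>w. restrict w I) ` C = (I \<rightarrow>\<^sub>E F)"

definition check_positions :: "'k set \<Rightarrow> 'i set \<Rightarrow> ('i \<Rightarrow> 'k) set \<Rightarrow> 'i set \<Rightarrow> bool" where
  "check_positions F P C J \<longleftrightarrow> J \<subseteq> P \<and> information_set F P C (P - J)"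

end

theory Submission
  imports Defs "HOL-Computational_Algebra.Polynomial"
begin

text \<open>
  For \<open>\<rho> = m(q-1) - 2\<close> the only exponents \<open>s\<close> of \<open>q\<close>-weight below \<open>2\<close> are \<open>0\<close> and the
  powers \<open>q\<^sup>j\<close>. The condition for \<open>s = 0\<close> merely determines the entry at \<open>X\<^sup>0\<close>, and the
  conditions for \<open>s = q\<^sup>j\<close> are Frobenius images of the one for \<open>s = 1\<close>. Hence the punctured code
  is the kernel of \<open>w \<mapsto> \<Sum> w\<^sub>i \<alpha>\<^sup>i\<close>, and a set \<open>J\<close> of \<open>m\<close> positions is a set of check
  positions as soon as the powers \<open>\<alpha>\<^sup>j\<close>, \<open>j \<in> J\<close>, are linearly independent over \<open>F\<close>.

  Through \<open>T\<close>, \<open>\<alpha>\<^sup>i = \<beta>\<^sup>i\<^sup>1 \<gamma>\<^sup>i\<^sup>2\<close> with \<open>\<beta>\<close>, \<open>\<gamma>\<close> of multiplicative orders \<open>r\<^sub>1\<close>, \<open>r\<^sub>2\<close>. The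
  conjugates \<open>\<beta>\<^sup>q\<^sup>k\<close> (\<open>k < a\<close>) are distinct, and so are the conjugates of \<open>\<gamma>\<close> under
  \<open>x \<mapsto> x\<^sup>q\<^sup>a\<close> (\<open>k < m/a\<close>), because \<open>q\<^sup>a\<^sup>t \<equiv> 1\<close> modulo both \<open>r\<^sub>1\<close> and \<open>r\<^sub>2\<close> forces \<open>m | at\<close>.
  So \<open>\<beta>\<close> has degree \<open>a\<close> over \<open>F\<close>, \<open>\<gamma>\<close> has degree \<open>m/a\<close> over \<open>F(\<beta>)\<close>, and the products
  \<open>\<beta>\<^sup>i\<^sup>1 \<gamma>\<^sup>i\<^sup>2\<close> indexed by \<open>\<Gamma>\<close> form the usual basis of this tower of fields.
\<close>

section \<open>Finite fields and the Frobenius map\<close>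

lemma subfield_sum_mem:
  assumes "is_subfield F" "\<And>i. i \<in> A \<Longrightarrow> f i \<in> F"
  shows "sum f A \<in> F"
  using assms(2)
  by (induction A rule: infinite_finite_induct) (use assms(1) in \<open>auto simp: is_subfield_def\<close>)

lemma subfield_diff_mem:
  assumes "is_subfield F" "x \<in> F" "y \<in> F"
  shows "x - y \<in> F"
  using assms unfolding is_subfield_def by (metis diff_conv_add_uminus)

lemma power_card_eq_self_if_mult_closed:
  fixes S :: "'k::field set"
  assumes fin: "finite S" and zero: "0 \<in> S" and mult: "\<And>x y. x \<in> S \<Longrightarrow> y \<in> S \<Longrightarrow> x * y \<in> S"
    and x: "x \<in> S"
  shows "x ^ card S = x"
proof (cases "x = 0")
  case True
  then show ?thesis using fin zero by (auto simp: card_gt_0_iff)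
next
  case False
  let ?U = "S - {0}"
  have inj: "inj_on (\<lambda>y. x * y) ?U" using False by (auto simp: inj_on_def)
  have "(\<lambda>y. x * y) ` ?U \<subseteq> ?U" using mult x False by auto
  then have "(\<lambda>y. x * y) ` ?U = ?U"
    using endo_inj_surj[OF _ _ inj] fin by blast
  then have "(\<Prod>y\<in>?U. y) = (\<Prod>y\<in>?U. x * y)"
    using prod.reindex[OF inj, of id] by simp
  also have "\<dots> = x ^ card ?U * (\<Prod>y\<in>?U. y)"
    by (simp add: prod.distrib)
  finally have "x ^ card ?U = 1"
    using fin by simp
  moreover have "card S = Suc (card ?U)"
    using fin zero by (metis card_Suc_Diff1)
  ultimately show ?thesis by simp
qed

lemma power_iterate_eq_self:
  fixes x :: "'a::monoid_mult"
  assumes "x ^ Q = x"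
  shows "x ^ (Q ^ k) = x"
  by (induction k) (simp_all add: power_mult assms)

lemma subfield_power_card:
  assumes "is_subfield F" "finite F" "x \<in> F"
  shows "x ^ card F = x"
  using assms by (intro power_card_eq_self_if_mult_closed) (auto simp: is_subfield_def)

lemma CHAR_eq_prime_if_card:
  assumes p: "prime p" and card: "card (UNIV :: 'k::{finite,field} set) = p ^ N"
  shows "CHAR('k) = p"
proof -
  have "prime CHAR('k)"
    using prime_CHAR_semidom finite_imp_CHAR_pos[where 'a = 'k] by simp
  moreover have "CHAR('k) dvd p ^ N"
    using CHAR_dvd_CARD[where 'a = 'k] card by simp
  ultimately show ?thesis
    using p by (metis prime_dvd_power primes_dvd_imp_eq)
qed

lemma frobenius_sum_prime_power:
  fixes f :: "'b \<Rightarrow> 'k::{finite,field}"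
  assumes p: "prime p" "q = p ^ e" and card: "card (UNIV :: 'k set) = q ^ m"
  shows "sum f A ^ (q ^ t) = (\<Sum>i\<in>A. f i ^ (q ^ t))"
proof -
  have "CHAR('k) = p"
    using CHAR_eq_prime_if_card[where 'k = 'k, OF p(1), of "e * m"] p(2) card
    by (simp add: power_mult)
  then show ?thesis
    using p by (intro freshmans_dream_sum'[where n = "e * t"]) (simp_all add: power_mult)
qed

lemma generator_power_eq_iff:
  fixes \<alpha> :: "'k::{finite,field}"
  assumes \<alpha>: "\<alpha> \<noteq> 0" "\<forall>x. x \<noteq> 0 \<longrightarrow> (\<exists>i. x = \<alpha> ^ i)"
    and n: "n = card (UNIV :: 'k set) - 1"
  shows "\<alpha> ^ u = \<alpha> ^ v \<longleftrightarrow> u mod n = v mod n"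
proof -
  have "card {0, 1 :: 'k} \<le> card (UNIV :: 'k set)" by (rule card_mono) auto
  then have card: "card (UNIV :: 'k set) = Suc n" and n_pos: "0 < n" using n by auto
  have "\<alpha> * \<alpha> ^ n = \<alpha> * 1"
    using power_card_eq_self_if_mult_closed[of UNIV \<alpha>] card by simp
  then have \<alpha>_n: "\<alpha> ^ n = 1" using \<alpha>(1) by simp
  have pow_mod: "\<alpha> ^ u = \<alpha> ^ (u mod n)" for u
  proof -
    have "\<alpha> ^ u = \<alpha> ^ (n * (u div n) + u mod n)" by simp
    also have "\<dots> = \<alpha> ^ (u mod n)" by (simp only: power_add power_mult \<alpha>_n power_one mult_1)
    finally show ?thesis .
  qed
  have "UNIV - {0} \<subseteq> (\<lambda>i. \<alpha> ^ i) ` {..<n}"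
  proof
    fix x :: 'k assume "x \<in> UNIV - {0}"
    then obtain i where "x = \<alpha> ^ (i mod n)" using \<alpha>(2) pow_mod by blast
    then show "x \<in> (\<lambda>i. \<alpha> ^ i) ` {..<n}" using n_pos by auto
  qed
  then have "n \<le> card ((\<lambda>i. \<alpha> ^ i) ` {..<n})"
    using card_mono[of "(\<lambda>i. \<alpha> ^ i) ` {..<n}" "UNIV - {0}"] card by simp
  then have "inj_on (\<lambda>i. \<alpha> ^ i) {..<n}"
    using card_image_le[of "{..<n}" "\<lambda>i. \<alpha> ^ i"] by (intro eq_card_imp_inj_on) auto
  then have "\<alpha> ^ (u mod n) = \<alpha> ^ (v mod n) \<longleftrightarrow> u mod n = v mod n"
    using n_pos by (simp add: inj_on_eq_iff)
  then show ?thesis using pow_mod by metis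
qed

section \<open>\<open>q\<close>-weights\<close>

lemma qweight_eq_digit_sum:
  assumes "2 \<le> q" "s \<le> N"
  shows "(\<Sum>r\<le>N. s div q ^ r mod q) = qweight q s"
  unfolding qweight_def
proof (rule sum.mono_neutral_right)
  show "\<forall>r\<in>{..N} - {..s}. s div q ^ r mod q = 0"
  proof
    fix r assume "r \<in> {..N} - {..s}"
    then have "s < r" by auto
    have "s < 2 ^ s" by (rule less_exp)
    also have "\<dots> \<le> q ^ s" using assms(1) by (simp add: power_mono)
    also have "\<dots> \<le> q ^ r" using assms(1) \<open>s < r\<close> by (intro power_increasing) auto
    finally show "s div q ^ r mod q = 0" by simp
  qed
qed (use assms in auto)

lemma qweight_div_mod:
  assumes "2 \<le> q"
  shows "qweight q s = s mod q + qweight q (s div q)"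
proof (cases s)
  case 0
  then show ?thesis by (simp add: qweight_def)
next
  case (Suc k)
  have "qweight q s = s mod q + (\<Sum>r\<le>k. s div q ^ Suc r mod q)"
    unfolding qweight_def Suc by (subst sum.atMost_Suc_shift) simp
  also have "(\<Sum>r\<le>k. s div q ^ Suc r mod q) = (\<Sum>r\<le>k. s div q div q ^ r mod q)"
    by (simp add: div_mult2_eq)
  also have "\<dots> = qweight q (s div q)"
  proof (rule qweight_eq_digit_sum[OF assms])
    show "s div q \<le> k"
      using assms Suc div_le_mono2[of 2 q s] by linarith
  qed
  finally show ?thesis .
qed

lemma qweight_eq_0_iff:
  assumes "2 \<le> q"
  shows "qweight q s = 0 \<longleftrightarrow> s = 0"
proof (induction s rule: less_induct)
  case (less s)
  show ?case
  proof (cases "s = 0")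
    case False
    show ?thesis
    proof
      assume "qweight q s = 0"
      then have "s mod q = 0" "qweight q (s div q) = 0"
        using qweight_div_mod[OF assms, of s] by auto
      moreover have "s div q < s" using False assms by simp
      ultimately have "s div q = 0" "s mod q = 0" using less.IH by auto
      then show "s = 0" using div_mult_mod_eq[of s q] by simp
    qed (use False in simp)
  qed (simp add: qweight_def)
qed

lemma qweight_le_1_imp_power:
  assumes q: "2 \<le> q"
  shows "0 < s \<Longrightarrow> qweight q s \<le> 1 \<Longrightarrow> \<exists>j. s = q ^ j"
proof (induction s rule: less_induct)
  case (less s)
  have s: "s = q * (s div q) + s mod q" by simp
  show ?case
  proof (cases "s mod q = 0")
    case True
    then have "0 < s div q" "s div q < s" "qweight q (s div q) \<le> 1"
      using less.prems q qweight_div_mod[OF q, of s] s by auto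
    then obtain j where "s div q = q ^ j" using less.IH by blast
    then have "s = q ^ Suc j" using True s by simp
    then show ?thesis by blast
  next
    case False
    then have "qweight q (s div q) = 0" "s mod q = 1"
      using qweight_div_mod[OF q, of s] less.prems by auto
    then have "s = q ^ 0"
      using s qweight_eq_0_iff[OF q] by simp
    then show ?thesis by blast
  qed
qed

section \<open>The punctured code as a kernel\<close>

lemma power_sum_frobenius_eq_0:
  fixes F :: "'k::field set" and \<alpha> :: 'k
  assumes F_fixed: "\<And>x. x \<in> F \<Longrightarrow> x ^ q = x"
    and frob: "\<And>j (f :: nat \<Rightarrow> 'k) A. sum f A ^ (q ^ j) = (\<Sum>i\<in>A. f i ^ (q ^ j))"
    and w: "\<And>i. i < n \<Longrightarrow> w i \<in> F" and sum0: "(\<Sum>i<n. w i * \<alpha> ^ i) = 0"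
  shows "(\<Sum>i<n. w i * \<alpha> ^ (i * q ^ j)) = 0"
proof -
  have "(\<Sum>i<n. w i * \<alpha> ^ (i * q ^ j)) = (\<Sum>i<n. (w i * \<alpha> ^ i) ^ (q ^ j))"
  proof (intro sum.cong refl)
    fix i assume "i \<in> {..<n}"
    then have "w i ^ (q ^ j) = w i" using w by (intro power_iterate_eq_self F_fixed) simp
    then show "w i * \<alpha> ^ (i * q ^ j) = (w i * \<alpha> ^ i) ^ (q ^ j)"
      by (simp add: power_mult_distrib power_mult)
  qed
  also have "\<dots> = (\<Sum>i<n. w i * \<alpha> ^ i) ^ (q ^ j)"
    by (rule frob[symmetric])
  also have "\<dots> = 0"
    using sum0 frob[where j = j and A = "{}"] by simp
  finally show ?thesis .
qed

lemma GRM_max_weight_mem_iff: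
  assumes "2 \<le> m * (q - 1)" "n = q ^ m - 1"
  shows "(b, w) \<in> GRM F q m (m * (q - 1) - 2) \<alpha> \<longleftrightarrow> b \<in> F \<and> w \<in> {0..<n} \<rightarrow>\<^sub>E F \<and>
    (\<forall>s<n. qweight q s < 2 \<longrightarrow> b * 0 ^ s + (\<Sum>i<n. w i * \<alpha> ^ (i * s)) = 0)"
proof -
  have weight: "m * (q - 1) - (m * (q - 1) - 2) = 2" using assms(1) by simp
  show ?thesis
    unfolding GRM_def assms(2) weight mem_Collect_eq case_prod_conv by blast
qed

lemma GRM_punct_eq_power_sum_kernel:
  fixes F :: "'k::field set" and \<alpha> :: 'k
  assumes F: "is_subfield F" "\<And>x. x \<in> F \<Longrightarrow> x ^ q = x" and q: "2 \<le> q"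
    and frob: "\<And>j (f :: nat \<Rightarrow> 'k) A. sum f A ^ (q ^ j) = (\<Sum>i\<in>A. f i ^ (q ^ j))"
    and n: "n = q ^ m - 1" "1 < n"
  shows "GRM_punct F q m (m * (q - 1) - 2) \<alpha> = {w \<in> {0..<n} \<rightarrow>\<^sub>E F. (\<Sum>i<n. w i * \<alpha> ^ i) = 0}"
proof -
  have "2 \<le> m * (q - 1)"
  proof (cases "m \<le> 1")
    case True
    then show ?thesis using n by (cases m) auto
  next
    case False
    then show ?thesis using q mult_le_mono[of 2 m 1 "q - 1"] by linarith
  qed
  note GRM_iff = GRM_max_weight_mem_iff[OF this n(1)]
  show ?thesis
  proof (intro equalityI subsetI)
    fix w assume "w \<in> GRM_punct F q m (m * (q - 1) - 2) \<alpha>"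
    then obtain b where b: "(b, w) \<in> GRM F q m (m * (q - 1) - 2) \<alpha>"
      unfolding GRM_punct_def by blast
    have "qweight q 1 < 2" using q by (simp add: qweight_def)
    then have "b * 0 ^ 1 + (\<Sum>i<n. w i * \<alpha> ^ (i * 1)) = 0"
      using b n(2) unfolding GRM_iff by blast
    then show "w \<in> {w \<in> {0..<n} \<rightarrow>\<^sub>E F. (\<Sum>i<n. w i * \<alpha> ^ i) = 0}"
      using b unfolding GRM_iff by simp
  next
    fix w assume w: "w \<in> {w \<in> {0..<n} \<rightarrow>\<^sub>E F. (\<Sum>i<n. w i * \<alpha> ^ i) = 0}"
    then have wF: "w i \<in> F" if "i < n" for i using that by auto
    define b where "b = - (\<Sum>i<n. w i)"
    have "b \<in> F"
      using F(1) subfield_sum_mem[OF F(1), of "{..<n}" w] wF unfolding b_def is_subfield_def by auto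
    moreover have "b * 0 ^ s + (\<Sum>i<n. w i * \<alpha> ^ (i * s)) = 0" if "qweight q s < 2" for s
    proof (cases "s = 0")
      case False
      then have "0 < s" "qweight q s \<le> 1" using that by auto
      then obtain j where "s = q ^ j"
        using qweight_le_1_imp_power[OF q] by blast
      then show ?thesis
        using power_sum_frobenius_eq_0[OF F(2) frob wF] w False by simp
    qed (simp add: b_def)
    ultimately have "(b, w) \<in> GRM F q m (m * (q - 1) - 2) \<alpha>"
      unfolding GRM_iff using w by blast
    then show "w \<in> GRM_punct F q m (m * (q - 1) - 2) \<alpha>"
      unfolding GRM_punct_def by blast
  qed
qed

section \<open>Check positions from independent powers\<close>

definition independent_over :: "'k::field set \<Rightarrow> ('i \<Rightarrow> 'k) \<Rightarrow> 'i set \<Rightarrow> bool" where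
  "independent_over F h J \<longleftrightarrow>
     (\<forall>c. (\<forall>j\<in>J. c j \<in> F) \<longrightarrow> (\<Sum>j\<in>J. c j * h j) = 0 \<longrightarrow> (\<forall>j\<in>J. c j = 0))"

lemma independent_over_sum_bij:
  fixes h :: "'i \<Rightarrow> 'k::{finite,field}"
  assumes F: "is_subfield F" and J: "finite J" "card (UNIV :: 'k set) = card F ^ card J"
    and indep: "independent_over F h J"
  shows "bij_betw (\<lambda>c. \<Sum>j\<in>J. c j * h j) (J \<rightarrow>\<^sub>E F) UNIV"
proof -
  let ?L = "\<lambda>c. \<Sum>j\<in>J. c j * h j"
  have inj: "inj_on ?L (J \<rightarrow>\<^sub>E F)"
  proof (rule inj_onI)
    fix c c' assume c: "c \<in> J \<rightarrow>\<^sub>E F" and c': "c' \<in> J \<rightarrow>\<^sub>E F" and "?L c = ?L c'"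
    then have "(\<Sum>j\<in>J. (c j - c' j) * h j) = 0"
      by (simp add: sum_subtractf left_diff_distrib)
    moreover have "\<forall>j\<in>J. c j - c' j \<in> F"
      using c c' subfield_diff_mem[OF F] by (auto simp: PiE_iff)
    ultimately have "\<forall>j\<in>J. c j - c' j = 0"
      using indep[unfolded independent_over_def, rule_format, of "\<lambda>j. c j - c' j"] by blast
    then show "c = c'" using PiE_ext[OF c c'] by simp
  qed
  moreover have "card (?L ` (J \<rightarrow>\<^sub>E F)) = card (UNIV :: 'k set)"
    using card_image[OF inj] card_PiE[OF J(1), of "\<lambda>_. F"] J(2) by simp
  ultimately show ?thesis
    unfolding bij_betw_def by (metis card_subset_eq finite subset_UNIV)
qed

lemma restrict_kernel_inj:
  fixes h :: "'i \<Rightarrow> 'k::field"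
  assumes P: "finite P" "J \<subseteq> P" and L: "inj_on (\<lambda>c. \<Sum>j\<in>J. c j * h j) (J \<rightarrow>\<^sub>E F)"
  shows "inj_on (\<lambda>w. restrict w (P - J)) {w \<in> P \<rightarrow>\<^sub>E F. (\<Sum>i\<in>P. w i * h i) = 0}"
proof (rule inj_onI)
  fix w w' assume "w \<in> {w \<in> P \<rightarrow>\<^sub>E F. (\<Sum>i\<in>P. w i * h i) = 0}"
    and "w' \<in> {w \<in> P \<rightarrow>\<^sub>E F. (\<Sum>i\<in>P. w i * h i) = 0}"
    and eq: "restrict w (P - J) = restrict w' (P - J)"
  then have w: "w \<in> P \<rightarrow>\<^sub>E F" "(\<Sum>i\<in>P. w i * h i) = 0"
    and w': "w' \<in> P \<rightarrow>\<^sub>E F" "(\<Sum>i\<in>P. w' i * h i) = 0" by auto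
  have on_diff: "w i = w' i" if "i \<in> P - J" for i
    using eq that by (metis restrict_apply')
  then have "(\<Sum>i\<in>P - J. w i * h i) = (\<Sum>i\<in>P - J. w' i * h i)"
    by (intro sum.cong) auto
  then have "(\<Sum>i\<in>P - J. w' i * h i) + (\<Sum>j\<in>J. w j * h j) =
      (\<Sum>i\<in>P - J. w' i * h i) + (\<Sum>j\<in>J. w' j * h j)"
    using w(2) w'(2) sum.subset_diff[OF P(2,1), of "\<lambda>i. w i * h i"]
      sum.subset_diff[OF P(2,1), of "\<lambda>i. w' i * h i"] by simp
  then have "(\<Sum>j\<in>J. restrict w J j * h j) = (\<Sum>j\<in>J. restrict w' J j * h j)"
    by simp
  moreover have "restrict w J \<in> J \<rightarrow>\<^sub>E F" "restrict w' J \<in> J \<rightarrow>\<^sub>E F"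
    using w(1) w'(1) P(2) by (auto simp: PiE_iff)
  ultimately have eq_J: "restrict w J = restrict w' J"
    using inj_onD[OF L] by blast
  have "w i = w' i" if "i \<in> J" for i
  proof -
    have "restrict w J i = restrict w' J i" using eq_J by (rule fun_cong)
    then show ?thesis using that by simp
  qed
  then have "w i = w' i" if "i \<in> P" for i
    using on_diff that by blast
  then show "w = w'"
    using w(1) w'(1) by (auto intro: PiE_ext)
qed

lemma restrict_kernel_image:
  fixes h :: "'i \<Rightarrow> 'k::field"
  assumes P: "finite P" "J \<subseteq> P" and L: "(\<lambda>c. \<Sum>j\<in>J. c j * h j) ` (J \<rightarrow>\<^sub>E F) = UNIV"
  shows "(\<lambda>w. restrict w (P - J)) ` {w \<in> P \<rightarrow>\<^sub>E F. (\<Sum>i\<in>P. w i * h i) = 0} = (P - J) \<rightarrow>\<^sub>E F"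
proof (intro equalityI subsetI)
  fix f assume "f \<in> (\<lambda>w. restrict w (P - J)) ` {w \<in> P \<rightarrow>\<^sub>E F. (\<Sum>i\<in>P. w i * h i) = 0}"
  then show "f \<in> (P - J) \<rightarrow>\<^sub>E F" by (auto simp: PiE_iff)
next
  fix f assume f: "f \<in> (P - J) \<rightarrow>\<^sub>E F"
  have "- (\<Sum>i\<in>P - J. f i * h i) \<in> (\<lambda>c. \<Sum>j\<in>J. c j * h j) ` (J \<rightarrow>\<^sub>E F)"
    using L by simp
  then obtain c where c: "c \<in> J \<rightarrow>\<^sub>E F" "(\<Sum>j\<in>J. c j * h j) = - (\<Sum>i\<in>P - J. f i * h i)"
    by (metis (no_types, lifting) imageE)
  define w where "w i = (if i \<in> P - J then f i else c i)" for i
  have "w \<in> P \<rightarrow>\<^sub>E F"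
    using f c(1) P(2) unfolding w_def by (auto simp: PiE_iff extensional_def)
  moreover have "(\<Sum>i\<in>P - J. w i * h i) = (\<Sum>i\<in>P - J. f i * h i)"
    unfolding w_def by simp
  moreover have "(\<Sum>j\<in>J. w j * h j) = (\<Sum>j\<in>J. c j * h j)"
    unfolding w_def by (intro sum.cong) auto
  ultimately have "w \<in> {w \<in> P \<rightarrow>\<^sub>E F. (\<Sum>i\<in>P. w i * h i) = 0}"
    using sum.subset_diff[OF P(2,1), of "\<lambda>i. w i * h i"] c(2) by simp
  moreover have "restrict w (P - J) = f"
    using f unfolding w_def by (auto simp: PiE_iff extensional_def)
  ultimately show "f \<in> (\<lambda>w. restrict w (P - J)) ` {w \<in> P \<rightarrow>\<^sub>E F. (\<Sum>i\<in>P. w i * h i) = 0}"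
    by (intro image_eqI[of f _ w]) simp_all
qed

lemma check_positions_if_restrict_bij:
  assumes F: "2 \<le> card F" and P: "finite P" "J \<subseteq> P"
    and bij: "bij_betw (\<lambda>w. restrict w (P - J)) C ((P - J) \<rightarrow>\<^sub>E F)"
  shows "check_positions F P C J"
proof -
  have card_C: "card C = card F ^ card (P - J)"
    using bij_betw_same_card[OF bij] card_PiE[of "P - J" "\<lambda>_. F"] P by simp
  have "code_dim F C = card (P - J)"
    unfolding code_dim_def
  proof (rule the_equality)
    fix k assume "card C = card F ^ k"
    then show "k = card (P - J)" using card_C F by simp
  qed (rule card_C)
  then show ?thesis
    using P bij unfolding check_positions_def information_set_def bij_betw_def by auto
qed

lemma check_positions_of_independent_powers:
  fixes F :: "'k::{finite,field} set" and \<alpha> :: 'k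
  assumes F: "is_subfield F" "card F = q" "2 \<le> q"
    and frob: "\<And>t (f :: nat \<Rightarrow> 'k) A. sum f A ^ (q ^ t) = (\<Sum>i\<in>A. f i ^ (q ^ t))"
    and card_k: "card (UNIV :: 'k set) = q ^ m"
    and n: "n = q ^ m - 1" "1 < n"
    and J: "J \<subseteq> {0..<n}" "card J = m" "independent_over F (\<lambda>i. \<alpha> ^ i) J"
  shows "check_positions F {0..<n} (GRM_punct F q m (m * (q - 1) - 2) \<alpha>) J"
proof -
  have F_fixed: "\<And>x. x \<in> F \<Longrightarrow> x ^ q = x"
    using subfield_power_card[OF F(1)] F(2) by auto
  have "finite J" using J(1) finite_subset by blast
  then have "bij_betw (\<lambda>c. \<Sum>j\<in>J. c j * \<alpha> ^ j) (J \<rightarrow>\<^sub>E F) UNIV"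
    using independent_over_sum_bij[OF F(1)] J(2,3) card_k F(2) by blast
  then have "bij_betw (\<lambda>w. restrict w ({0..<n} - J))
      {w \<in> {0..<n} \<rightarrow>\<^sub>E F. (\<Sum>i\<in>{0..<n}. w i * \<alpha> ^ i) = 0} (({0..<n} - J) \<rightarrow>\<^sub>E F)"
    unfolding bij_betw_def
    using restrict_kernel_inj[where h = "\<lambda>i. \<alpha> ^ i", OF _ J(1)]
      restrict_kernel_image[where h = "\<lambda>i. \<alpha> ^ i", OF _ J(1)] by simp
  moreover have "GRM_punct F q m (m * (q - 1) - 2) \<alpha> =
      {w \<in> {0..<n} \<rightarrow>\<^sub>E F. (\<Sum>i\<in>{0..<n}. w i * \<alpha> ^ i) = 0}"
    using GRM_punct_eq_power_sum_kernel[OF F(1) F_fixed F(3) frob n] by (simp add: atLeast0LessThan)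
  ultimately show ?thesis
    using check_positions_if_restrict_bij[of F "{0..<n}" J] F J(1) by simp
qed

section \<open>Multiplicative orders\<close>

lemma ord_pred_power:
  fixes q :: nat
  assumes q: "1 < q"
  shows "ord (q ^ m - 1) q = m"
proof (cases "m = 0")
  case False
  let ?n = "q ^ m - 1"
  have "q ^ m = ?n + 1" using q by simp
  then have "[q ^ m = 1] (mod ?n)" unfolding cong_def by (metis mod_add_self1)
  then have dvd: "ord ?n q dvd m" by (rule ord_divides[THEN iffD1])
  have no_smaller: "\<not> [q ^ t = 1] (mod ?n)" if t: "0 < t" "t < m" for t
  proof -
    have "q \<le> q ^ t" using q t(1) by (simp add: self_le_power)
    moreover have "q ^ t * q \<le> q ^ m"
      using q t(2) power_increasing[of "Suc t" m q] by (simp add: mult.commute)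
    ultimately have "1 < q ^ t" "q ^ t < ?n"
      using q mult_le_mono2[of 2 q "q ^ t"] by linarith+
    then show ?thesis using q t(1) by (simp add: cong_def)
  qed
  have "0 < ord ?n q" using dvd False by (intro gr0I) (metis dvd_0_left)
  then have "\<not> ord ?n q < m"
    using no_smaller ord_works[of q ?n] by blast
  then show ?thesis
    using dvd False by (simp add: dvd_imp_le le_antisym)
qed (use q in simp)

lemma ord_dvd_ord_mult:
  fixes q :: nat
  shows "ord r1 q dvd ord (r1 * r2) q"
proof -
  have "[q ^ ord (r1 * r2) q = 1] (mod r1 * r2)" by (rule ord_works[THEN conjunct1])
  then have "[q ^ ord (r1 * r2) q = 1] (mod r1)" by (rule cong_modulus_mult_nat)
  then show ?thesis by (rule ord_divides[THEN iffD1])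
qed

lemma ord_le_modulus:
  fixes q :: nat
  assumes "0 < n"
  shows "ord n q \<le> n"
proof (cases "coprime n q")
  case True
  then have "ord n q \<le> totient n"
    using assms order_divides_totient by (simp add: dvd_imp_le)
  then show ?thesis using totient_le order.trans by blast
qed simp

text \<open>Since \<open>q\<^sup>a \<equiv> 1 (mod r\<^sub>1)\<close> anyway, \<open>(q\<^sup>a)\<^sup>t \<equiv> 1 (mod r\<^sub>2)\<close> holds iff
  \<open>q\<^sup>a\<^sup>t \<equiv> 1 (mod r\<^sub>1 r\<^sub>2)\<close>.\<close>
lemma ord_power_ord_factor:
  fixes q :: nat
  assumes cop: "coprime r1 r2" and pos: "0 < ord (r1 * r2) q"
  shows "ord r2 (q ^ ord r1 q) = ord (r1 * r2) q div ord r1 q"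
proof -
  obtain d where m: "ord (r1 * r2) q = ord r1 q * d"
    using ord_dvd_ord_mult by blast
  have a_pos: "0 < ord r1 q" using pos unfolding m by simp
  have "ord r2 (q ^ ord r1 q) dvd t \<longleftrightarrow> d dvd t" for t
  proof -
    have mod_r1: "[q ^ (ord r1 q * t) = 1] (mod r1)" by (simp add: ord_divides')
    have "ord r2 (q ^ ord r1 q) dvd t \<longleftrightarrow> [q ^ (ord r1 q * t) = 1] (mod r2)"
      using ord_divides[of "q ^ ord r1 q" t r2] by (simp add: power_mult)
    also have "\<dots> \<longleftrightarrow> [q ^ (ord r1 q * t) = 1] (mod r1 * r2)"
    proof
      assume "[q ^ (ord r1 q * t) = 1] (mod r2)"
      then show "[q ^ (ord r1 q * t) = 1] (mod r1 * r2)"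
        using coprime_cong_mult_nat[OF mod_r1 _ cop] by blast
    next
      assume "[q ^ (ord r1 q * t) = 1] (mod r1 * r2)"
      then show "[q ^ (ord r1 q * t) = 1] (mod r2)"
        using cong_modulus_mult_nat[of _ _ r2 r1] by (simp add: mult.commute)
    qed
    also have "\<dots> \<longleftrightarrow> ord (r1 * r2) q dvd ord r1 q * t"
      by (rule ord_divides)
    also have "\<dots> \<longleftrightarrow> d dvd t"
      using a_pos unfolding m by (simp del: ord_gt_0_iff)
    finally show ?thesis .
  qed
  from this[of d] this[of "ord r2 (q ^ ord r1 q)"] have "ord r2 (q ^ ord r1 q) = d"
    by (simp add: dvd_antisym)
  then show ?thesis using m a_pos by simp
qed

lemma crt_index_set_eq:
  fixes q r1 r2 m :: nat
  assumes cop: "coprime r1 r2" and r: "0 < r1" "0 < r2"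
    and ord: "ord (r1 * r2) q = m" and m: "0 < m"
  shows "{(i1, i2) \<in> {0..<r1} \<times> {0..<r2}. i1 < ord r1 q \<and> i2 < m div ord r1 q} =
    {..<ord r1 q} \<times> {..<m div ord r1 q}"
proof -
  have "ord r1 q \<le> r1" using ord_le_modulus r(1) by blast
  moreover have "m div ord r1 q \<le> r2"
    using ord_le_modulus[of r2 "q ^ ord r1 q"] ord_power_ord_factor[OF cop, of q] ord m r(2)
    by (simp del: ord_gt_0_iff)
  ultimately show ?thesis by auto
qed

section \<open>The decomposition given by \<open>T\<close>\<close>

lemma mod_double_eq_self_imp_0:
  fixes x r :: nat
  assumes "x < r" "x = (x + x) mod r"
  shows "x = 0"
proof (cases "x + x < r")
  case False
  then have "(x + x) mod r = x + x - r" using assms(1) by (simp add: mod_if)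
  then show ?thesis using assms by simp
qed (use assms in simp)

lemma crt_hom_zero:
  fixes n r1 r2 :: nat and T :: "nat \<Rightarrow> nat \<times> nat"
  assumes hom: "\<forall>i<n. \<forall>j<n. T ((i + j) mod n) =
                  ((fst (T i) + fst (T j)) mod r1, (snd (T i) + snd (T j)) mod r2)"
    and n: "0 < n" and T0: "T 0 \<in> {0..<r1} \<times> {0..<r2}"
  shows "T 0 = (0, 0)"
proof -
  obtain x y where xy: "T 0 = (x, y)" by fastforce
  have "T ((0 + 0) mod n) = ((fst (T 0) + fst (T 0)) mod r1, (snd (T 0) + snd (T 0)) mod r2)"
    using hom n by blast
  then have "(x, y) = ((x + x) mod r1, (y + y) mod r2)"
    unfolding xy add_0 mod_0 fst_conv snd_conv .
  then have "x = (x + x) mod r1" "y = (y + y) mod r2" by (meson Pair_inject)+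
  moreover have "x < r1" "y < r2" using T0 xy by auto
  ultimately show ?thesis using xy mod_double_eq_self_imp_0 by simp
qed

lemma crt_hom_mult:
  fixes n r1 r2 :: nat and T :: "nat \<Rightarrow> nat \<times> nat"
  assumes hom: "\<forall>i<n. \<forall>j<n. T ((i + j) mod n) =
                  ((fst (T i) + fst (T j)) mod r1, (snd (T i) + snd (T j)) mod r2)"
    and n: "0 < n" and T0: "T 0 = (0, 0)"
  shows "T (k * e mod n) = (k * fst (T (e mod n)) mod r1, k * snd (T (e mod n)) mod r2)"
proof (induction k)
  case 0
  then show ?case using T0 n by simp
next
  case (Suc k)
  have "Suc k * e mod n = (e mod n + k * e mod n) mod n" by (simp add: mod_add_eq)
  then have "T (Suc k * e mod n) = ((fst (T (e mod n)) + fst (T (k * e mod n))) mod r1,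
      (snd (T (e mod n)) + snd (T (k * e mod n))) mod r2)"
    using hom n by simp
  also have "\<dots> = (Suc k * fst (T (e mod n)) mod r1, Suc k * snd (T (e mod n)) mod r2)"
    using Suc.IH by (simp add: mod_add_right_eq)
  finally show ?case .
qed

lemma crt_hom_basis:
  fixes n r1 r2 :: nat and T :: "nat \<Rightarrow> nat \<times> nat"
  assumes T: "bij_betw T {0..<n} ({0..<r1} \<times> {0..<r2})"
    and hom: "\<forall>i<n. \<forall>j<n. T ((i + j) mod n) =
                  ((fst (T i) + fst (T j)) mod r1, (snd (T i) + snd (T j)) mod r2)"
    and r: "1 < r1" "1 < r2"
  obtains e1 e2 where "\<And>i1 i2. T ((i1 * e1 + i2 * e2) mod n) = (i1 mod r1, i2 mod r2)"
proof -
  have img: "T ` {0..<n} = {0..<r1} \<times> {0..<r2}" using T by (simp add: bij_betw_def)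
  have "(0, 0) \<in> T ` {0..<n}" using img r by auto
  then have n: "0 < n" by auto
  have "T 0 \<in> T ` {0..<n}" using n by simp
  then have T0: "T 0 = (0, 0)" using crt_hom_zero[OF hom n] img by simp
  have "(1, 0) \<in> T ` {0..<n}" "(0, 1) \<in> T ` {0..<n}" using img r by auto
  then obtain e1 e2 where e: "e1 < n" "T e1 = (1, 0)" "e2 < n" "T e2 = (0, 1)" by auto
  show ?thesis
  proof (rule that)
    fix i1 i2
    have "T ((i1 * e1 + i2 * e2) mod n) = T ((i1 * e1 mod n + i2 * e2 mod n) mod n)"
      by (simp add: mod_add_eq)
    also have "\<dots> = ((fst (T (i1 * e1 mod n)) + fst (T (i2 * e2 mod n))) mod r1,
        (snd (T (i1 * e1 mod n)) + snd (T (i2 * e2 mod n))) mod r2)"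
      using hom n by simp
    also have "\<dots> = (i1 mod r1, i2 mod r2)"
      using crt_hom_mult[OF hom n T0, of i1 e1] crt_hom_mult[OF hom n T0, of i2 e2] e by simp
    finally show "T ((i1 * e1 + i2 * e2) mod n) = (i1 mod r1, i2 mod r2)" .
  qed
qed

lemma bij_betw_preimage:
  assumes "bij_betw f A B" "C \<subseteq> B"
  shows "bij_betw f {x \<in> A. f x \<in> C} C"
proof (rule bij_betw_subset[OF assms(1)])
  show "f ` {x \<in> A. f x \<in> C} = C"
    using assms unfolding bij_betw_def by blast
qed auto

lemma generator_crt_factorization:
  fixes \<alpha> :: "'k::{finite,field}" and n r1 r2 :: nat and T :: "nat \<Rightarrow> nat \<times> nat"
  assumes \<alpha>: "\<alpha> \<noteq> 0" "\<forall>x. x \<noteq> 0 \<longrightarrow> (\<exists>i. x = \<alpha> ^ i)"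
    and n: "n = card (UNIV :: 'k set) - 1"
    and T: "bij_betw T {0..<n} ({0..<r1} \<times> {0..<r2})"
    and hom: "\<forall>i<n. \<forall>j<n. T ((i + j) mod n) =
                  ((fst (T i) + fst (T j)) mod r1, (snd (T i) + snd (T j)) mod r2)"
    and r: "1 < r1" "1 < r2"
  obtains \<beta> \<gamma> where "\<And>u v. \<beta> ^ u = \<beta> ^ v \<longleftrightarrow> u mod r1 = v mod r1"
    and "\<And>u v. \<gamma> ^ u = \<gamma> ^ v \<longleftrightarrow> u mod r2 = v mod r2"
    and "\<And>i. i < n \<Longrightarrow> \<alpha> ^ i = \<beta> ^ fst (T i) * \<gamma> ^ snd (T i)"
proof -
  obtain e1 e2 where e: "\<And>i1 i2. T ((i1 * e1 + i2 * e2) mod n) = (i1 mod r1, i2 mod r2)"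
    using crt_hom_basis[OF T hom r] by blast
  have img: "T ` {0..<n} = {0..<r1} \<times> {0..<r2}" and T_inj: "inj_on T {0..<n}"
    using T by (simp_all add: bij_betw_def)
  have "(0, 0) \<in> T ` {0..<n}" using img r by auto
  then have n_pos: "0 < n" by auto
  have \<alpha>_eq: "\<alpha> ^ u = \<alpha> ^ v \<longleftrightarrow> T (u mod n) = T (v mod n)" for u v
    using generator_power_eq_iff[OF \<alpha> n] inj_on_eq_iff[OF T_inj] n_pos by simp
  have prod: "(\<alpha> ^ e1) ^ i1 * (\<alpha> ^ e2) ^ i2 = \<alpha> ^ (i1 * e1 + i2 * e2)" for i1 i2
    by (simp add: power_add power_mult mult.commute)
  show ?thesis
  proof (rule that[of "\<alpha> ^ e1" "\<alpha> ^ e2"])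
    show "(\<alpha> ^ e1) ^ u = (\<alpha> ^ e1) ^ v \<longleftrightarrow> u mod r1 = v mod r1" for u v
      using \<alpha>_eq[of "u * e1 + 0 * e2" "v * e1 + 0 * e2"] prod[of u 0] prod[of v 0] e[of u 0] e[of v 0]
      by simp
    show "(\<alpha> ^ e2) ^ u = (\<alpha> ^ e2) ^ v \<longleftrightarrow> u mod r2 = v mod r2" for u v
      using \<alpha>_eq[of "0 * e1 + u * e2" "0 * e1 + v * e2"] prod[of 0 u] prod[of 0 v] e[of 0 u] e[of 0 v]
      by simp
  next
    fix i assume i: "i < n"
    then have "T i \<in> T ` {0..<n}" by simp
    then have "T i \<in> {0..<r1} \<times> {0..<r2}" unfolding img .
    then have "T ((fst (T i) * e1 + snd (T i) * e2) mod n) = T (i mod n)"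
      using e i by auto
    then show "\<alpha> ^ i = (\<alpha> ^ e1) ^ fst (T i) * (\<alpha> ^ e2) ^ snd (T i)"
      using \<alpha>_eq prod by simp
  qed
qed

section \<open>Independence of the tower basis\<close>

text \<open>If the coefficients are fixed by \<open>x \<mapsto> x\<^sup>Q\<close>, every conjugate \<open>y\<^sup>Q\<^sup>k\<close> is a root of the same
  polynomial of degree \<open>< d\<close>; with \<open>d\<close> distinct conjugates that polynomial vanishes.\<close>
lemma frobenius_fixed_coeffs_independent:
  fixes y :: "'k::field" and c :: "nat \<Rightarrow> 'k"
  assumes frob: "\<And>k (f :: nat \<Rightarrow> 'k) A. sum f A ^ (Q ^ k) = (\<Sum>i\<in>A. f i ^ (Q ^ k))"
    and fixed: "\<And>i. i < d \<Longrightarrow> c i ^ Q = c i"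
    and conj_inj: "inj_on (\<lambda>k. y ^ (Q ^ k)) {..<d}"
    and root: "(\<Sum>i<d. c i * y ^ i) = 0"
  shows "\<forall>i<d. c i = 0"
proof -
  define p where "p = (\<Sum>i<d. monom (c i) i)"
  have coeff_p: "coeff p j = (if j < d then c j else 0)" for j
    unfolding p_def by (simp add: coeff_sum)
  have roots: "poly p (y ^ (Q ^ k)) = 0" for k
  proof -
    have "poly p (y ^ (Q ^ k)) = (\<Sum>i<d. c i * (y ^ (Q ^ k)) ^ i)"
      unfolding p_def by (simp add: poly_sum poly_monom)
    also have "\<dots> = (\<Sum>i<d. (c i * y ^ i) ^ (Q ^ k))"
    proof (intro sum.cong refl)
      fix i assume "i \<in> {..<d}"
      then have "c i ^ (Q ^ k) = c i" by (intro power_iterate_eq_self fixed) simp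
      then show "c i * (y ^ (Q ^ k)) ^ i = (c i * y ^ i) ^ (Q ^ k)"
        by (simp add: power_mult_distrib mult.commute flip: power_mult)
    qed
    also have "\<dots> = (\<Sum>i<d. c i * y ^ i) ^ (Q ^ k)"
      by (rule frob[symmetric])
    also have "\<dots> = 0"
      using root frob[where k = k and A = "{}"] by simp
    finally show ?thesis .
  qed
  have "p = 0"
  proof (rule ccontr)
    assume "p \<noteq> 0"
    have "d = card ((\<lambda>k. y ^ (Q ^ k)) ` {..<d})"
      using card_image[OF conj_inj] by simp
    also have "\<dots> \<le> card {x. poly p x = 0}"
      using roots poly_roots_finite[OF \<open>p \<noteq> 0\<close>] by (intro card_mono) auto
    also have "\<dots> \<le> degree p"
      by (rule card_poly_roots_bound[OF \<open>p \<noteq> 0\<close>])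
    finally have "coeff p (degree p) = 0"
      using coeff_p by simp
    then show False using \<open>p \<noteq> 0\<close> by simp
  qed
  then show ?thesis using coeff_p by (metis coeff_0)
qed

lemma power_sum_fixed_by_frobenius:
  fixes \<beta> :: "'k::field" and F :: "'k set"
  assumes frob: "\<And>t (f :: nat \<Rightarrow> 'k) A. sum f A ^ (q ^ t) = (\<Sum>i\<in>A. f i ^ (q ^ t))"
    and F_fixed: "\<And>x. x \<in> F \<Longrightarrow> x ^ q = x"
    and \<beta>_fixed: "\<beta> ^ (q ^ a) = \<beta>"
    and c: "\<And>i. i \<in> A \<Longrightarrow> c i \<in> F"
  shows "(\<Sum>i\<in>A. c i * \<beta> ^ i) ^ (q ^ a) = (\<Sum>i\<in>A. c i * \<beta> ^ i)"
proof -
  have "(\<Sum>i\<in>A. c i * \<beta> ^ i) ^ (q ^ a) = (\<Sum>i\<in>A. (c i * \<beta> ^ i) ^ (q ^ a))"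
    by (rule frob)
  also have "\<dots> = (\<Sum>i\<in>A. c i * \<beta> ^ i)"
  proof (intro sum.cong refl)
    fix i assume "i \<in> A"
    then have "c i ^ (q ^ a) = c i"
      using c by (intro power_iterate_eq_self F_fixed)
    moreover have "(\<beta> ^ i) ^ (q ^ a) = (\<beta> ^ (q ^ a)) ^ i"
      by (simp only: mult.commute flip: power_mult)
    ultimately show "(c i * \<beta> ^ i) ^ (q ^ a) = c i * \<beta> ^ i"
      using \<beta>_fixed by (simp add: power_mult_distrib)
  qed
  finally show ?thesis .
qed

lemma tower_products_independent:
  fixes \<beta> \<gamma> :: "'k::field" and F :: "'k set"
  assumes frob: "\<And>t (f :: nat \<Rightarrow> 'k) A. sum f A ^ (q ^ t) = (\<Sum>i\<in>A. f i ^ (q ^ t))"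
    and F_fixed: "\<And>x. x \<in> F \<Longrightarrow> x ^ q = x"
    and \<beta>_fixed: "\<beta> ^ (q ^ a) = \<beta>"
    and \<beta>_conj: "inj_on (\<lambda>k. \<beta> ^ (q ^ k)) {..<a}"
    and \<gamma>_conj: "inj_on (\<lambda>k. \<gamma> ^ ((q ^ a) ^ k)) {..<d}"
  shows "independent_over F (\<lambda>(i1, i2). \<beta> ^ i1 * \<gamma> ^ i2) ({..<a} \<times> {..<d})"
  unfolding independent_over_def
proof (intro allI impI)
  fix c assume cF: "\<forall>x\<in>{..<a} \<times> {..<d}. c x \<in> F"
    and sum0: "(\<Sum>x\<in>{..<a} \<times> {..<d}. c x * (case x of (i1, i2) \<Rightarrow> \<beta> ^ i1 * \<gamma> ^ i2)) = 0"
  define C where "C i2 = (\<Sum>i1<a. c (i1, i2) * \<beta> ^ i1)" for i2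
  have C_root: "(\<Sum>i2<d. C i2 * \<gamma> ^ i2) = 0"
  proof -
    have "(\<Sum>i2<d. C i2 * \<gamma> ^ i2) = (\<Sum>i2<d. \<Sum>i1<a. c (i1, i2) * (\<beta> ^ i1 * \<gamma> ^ i2))"
      unfolding C_def by (simp add: sum_distrib_right mult.assoc)
    also have "\<dots> = (\<Sum>x\<in>{..<a} \<times> {..<d}. c x * (case x of (i1, i2) \<Rightarrow> \<beta> ^ i1 * \<gamma> ^ i2))"
      by (subst sum.swap) (simp add: sum.cartesian_product split_beta)
    finally show ?thesis using sum0 by simp
  qed
  have frob_a: "sum f A ^ ((q ^ a) ^ k) = (\<Sum>i\<in>A. f i ^ ((q ^ a) ^ k))" for k and f :: "nat \<Rightarrow> 'k" and A
    by (simp add: frob flip: power_mult)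
  have C_fixed: "C i2 ^ (q ^ a) = C i2" if "i2 < d" for i2
    unfolding C_def using cF that by (intro power_sum_fixed_by_frobenius[OF frob F_fixed \<beta>_fixed]) auto
  have C0: "\<forall>i2<d. C i2 = 0"
    by (rule frobenius_fixed_coeffs_independent[OF frob_a C_fixed \<gamma>_conj C_root])
  show "\<forall>x\<in>{..<a} \<times> {..<d}. c x = 0"
  proof
    fix x assume "x \<in> {..<a} \<times> {..<d}"
    then obtain i1 i2 where x: "x = (i1, i2)" "i1 < a" "i2 < d" by blast
    have fixed: "c (j, i2) ^ q = c (j, i2)" if "j < a" for j
      using cF that x(3) by (intro F_fixed) blast
    have "(\<Sum>j<a. c (j, i2) * \<beta> ^ j) = 0"
      using C0 x(3) unfolding C_def by simp
    then have "\<forall>j<a. c (j, i2) = 0"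
      using frobenius_fixed_coeffs_independent[where c = "\<lambda>j. c (j, i2)", OF frob fixed \<beta>_conj]
      by simp
    then show "c x = 0" using x by simp
  qed
qed

lemma independent_over_reindex:
  assumes indep: "independent_over F h G" and T: "bij_betw T J G"
    and h': "\<And>j. j \<in> J \<Longrightarrow> h' j = h (T j)"
  shows "independent_over F h' J"
  unfolding independent_over_def
proof (intro allI impI)
  fix c assume cF: "\<forall>j\<in>J. c j \<in> F" and sum0: "(\<Sum>j\<in>J. c j * h' j) = 0"
  define c' where "c' x = c (inv_into J T x)" for x
  have inv: "inv_into J T (T j) = j" if "j \<in> J" for j
    using T that by (simp add: bij_betw_def)
  have "(\<Sum>x\<in>G. c' x * h x) = (\<Sum>j\<in>J. c' (T j) * h (T j))"
    using sum.reindex_bij_betw[OF T, of "\<lambda>x. c' x * h x"] by simp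
  also have "\<dots> = (\<Sum>j\<in>J. c j * h' j)"
    by (intro sum.cong) (simp_all add: c'_def inv h')
  finally have "(\<Sum>x\<in>G. c' x * h x) = 0"
    using sum0 by simp
  moreover have "\<forall>x\<in>G. c' x \<in> F"
    using cF bij_betw_inv_into[OF T] unfolding c'_def bij_betw_def by auto
  ultimately have "\<forall>x\<in>G. c' x = 0"
    using indep unfolding independent_over_def by blast
  then show "\<forall>j\<in>J. c j = 0"
    using T inv unfolding c'_def bij_betw_def by auto
qed

lemma crt_products_independent:
  fixes \<beta> \<gamma> :: "'k::field" and F :: "'k set" and q r1 r2 m :: nat
  assumes frob: "\<And>t (f :: nat \<Rightarrow> 'k) A. sum f A ^ (q ^ t) = (\<Sum>i\<in>A. f i ^ (q ^ t))"
    and F_fixed: "\<And>x. x \<in> F \<Longrightarrow> x ^ q = x"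
    and \<beta>: "\<And>u v. \<beta> ^ u = \<beta> ^ v \<longleftrightarrow> u mod r1 = v mod r1"
    and \<gamma>: "\<And>u v. \<gamma> ^ u = \<gamma> ^ v \<longleftrightarrow> u mod r2 = v mod r2"
    and cop: "coprime r1 r2" and ord: "ord (r1 * r2) q = m" and m: "0 < m"
  shows "independent_over F (\<lambda>(i1, i2). \<beta> ^ i1 * \<gamma> ^ i2) ({..<ord r1 q} \<times> {..<m div ord r1 q})"
proof (rule tower_products_independent[OF frob F_fixed])
  have "coprime (r1 * r2) q" using ord m by (metis ord_gt_0_iff)
  then have cop_q: "coprime r1 q" "coprime r2 (q ^ ord r1 q)" by simp_all
  have "[q ^ ord r1 q = 1] (mod r1)" by (rule ord_works[THEN conjunct1])
  then show "\<beta> ^ (q ^ ord r1 q) = \<beta>"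
    using \<beta>[of "q ^ ord r1 q" 1] by (simp add: cong_def)
  show "inj_on (\<lambda>k. \<beta> ^ (q ^ k)) {..<ord r1 q}"
    using inj_power_mod[OF cop_q(1)] \<beta> by (simp add: inj_on_def)
  have "ord r2 (q ^ ord r1 q) = m div ord r1 q"
    using ord_power_ord_factor[OF cop, of q] ord m by (simp del: ord_gt_0_iff)
  then show "inj_on (\<lambda>k. \<gamma> ^ ((q ^ ord r1 q) ^ k)) {..<m div ord r1 q}"
    using inj_power_mod[OF cop_q(2)] \<gamma> by (simp add: inj_on_def)
qed

theorem mainTheorem1:
  fixes q m n r1 r2 :: nat
    and F :: "'k::{finite,field} set"
    and \<alpha> :: 'k
    and T :: "nat \<Rightarrow> nat \<times> nat"
  assumes q_pp: "\<exists>p e. prime p \<and> e > 0 \<and> q = p ^ e"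
    and q_ge: "q \<ge> 2"
    and m_ge: "m \<ge> 1"
    and card_k: "card (UNIV :: 'k set) = q ^ m"
    and F_sub: "is_subfield F"
    and card_F: "card F = q"
    and n_def: "n = q ^ m - 1"
    and n_fact: "n = r1 * r2"
    and r1_gt: "r1 > 1" and r2_gt: "r2 > 1"
    and cop: "coprime r1 r2"
    and gen: "\<alpha> \<noteq> 0 \<and> (\<forall>x::'k. x \<noteq> 0 \<longrightarrow> (\<exists>i. x = \<alpha> ^ i))"
    and T_bij: "bij_betw T {0..<n} ({0..<r1} \<times> {0..<r2})"
    and T_hom: "\<forall>i<n. \<forall>j<n. T ((i + j) mod n) =
                  ((fst (T i) + fst (T j)) mod r1, (snd (T i) + snd (T j)) mod r2)"
  shows "ord r1 q dvd m \<and>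
         check_positions F {0..<n} (GRM_punct F q m (m * (q - 1) - 2) \<alpha>)
           {i \<in> {0..<n}. T i \<in> {(i1, i2) \<in> {0..<r1} \<times> {0..<r2}.
                                  i1 < ord r1 q \<and> i2 < m div ord r1 q}}"
proof -
  obtain p e where p: "prime p" "q = p ^ e" using q_pp by blast
  have frob: "\<And>t (f :: nat \<Rightarrow> 'k) A. sum f A ^ (q ^ t) = (\<Sum>i\<in>A. f i ^ (q ^ t))"
    by (rule frobenius_sum_prime_power[OF p card_k])
  have F_fixed: "\<And>x. x \<in> F \<Longrightarrow> x ^ q = x"
    using subfield_power_card[OF F_sub] card_F by auto
  have ord_m: "ord (r1 * r2) q = m"
    using ord_pred_power[of q m] q_ge n_def n_fact by simp
  have a_dvd: "ord r1 q dvd m"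
    using ord_dvd_ord_mult[of r1 q r2] ord_m by simp
  let ?\<Gamma> = "{(i1, i2) \<in> {0..<r1} \<times> {0..<r2}. i1 < ord r1 q \<and> i2 < m div ord r1 q}"
  let ?J = "{i \<in> {0..<n}. T i \<in> ?\<Gamma>}"
  have \<Gamma>: "?\<Gamma> = {..<ord r1 q} \<times> {..<m div ord r1 q}"
    using crt_index_set_eq[OF cop _ _ ord_m] r1_gt r2_gt m_ge by simp
  have n_card: "n = card (UNIV :: 'k set) - 1" using n_def card_k by simp
  obtain \<beta> \<gamma> where \<beta>: "\<And>u v. \<beta> ^ u = \<beta> ^ v \<longleftrightarrow> u mod r1 = v mod r1"
    and \<gamma>: "\<And>u v. \<gamma> ^ u = \<gamma> ^ v \<longleftrightarrow> u mod r2 = v mod r2"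
    and \<alpha>_T: "\<And>i. i < n \<Longrightarrow> \<alpha> ^ i = \<beta> ^ fst (T i) * \<gamma> ^ snd (T i)"
    by (rule generator_crt_factorization[OF conjunct1[OF gen] conjunct2[OF gen] n_card T_bij T_hom
          r1_gt r2_gt]) (rule that)
  have J_bij: "bij_betw T ?J ?\<Gamma>"
    by (rule bij_betw_preimage[OF T_bij]) auto
  have "independent_over F (\<lambda>(i1, i2). \<beta> ^ i1 * \<gamma> ^ i2) ?\<Gamma>"
    unfolding \<Gamma> using crt_products_independent[OF frob F_fixed \<beta> \<gamma> cop ord_m] m_ge by simp
  then have J_indep: "independent_over F (\<lambda>i. \<alpha> ^ i) ?J"
    by (rule independent_over_reindex[OF _ J_bij]) (simp add: \<alpha>_T split_beta)
  have "card ?\<Gamma> = m" unfolding \<Gamma> using a_dvd by simp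
  with bij_betw_same_card[OF J_bij] have J_card: "card ?J = m" by (rule trans)
  have J_sub: "?J \<subseteq> {0..<n}" by blast
  have "1 < n" using n_fact r1_gt r2_gt by (simp add: one_less_mult)
  with a_dvd show ?thesis
    using check_positions_of_independent_powers[OF F_sub card_F q_ge frob card_k n_def _ J_sub J_card
        J_indep] by blast
qed

end
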